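(* Let $1\le p<\infty$, $X=\ell_p(\mathbb Z_+)$, and let $\mathbf u,\mathbf v$ be bounded sequences of non-zero scalars with $\inf_{n\ge1}|u_n|>0$ and $\inf_{n\ge1}|v_n|>0$. If the weighted backward shifts $B_{\mathbf u}$ and $B_{\mathbf v}$ are not similar, then they are orthogonal.
   Context: $(e_n)_{n\ge0}$ is the canonical basis of $\ell_p(\mathbb Z_+)$ (real or complex); $B_{\mathbf w}e_0=0$, $B_{\mathbf w}e_n=w_ne_{n-1}$. Operators $T_1,T_2$ are similar if $T_1=JT_2J^{-1}$ for some invertible bounded operator $J$ on $X$. They are orthogonal if any $T_1$-invariant and $T_2$-invariant Borel probability measures $m_1,m_2$ with $m_1(\{0\})=0=m_2(\{0\})$ are mutually singular. *)

theory Defs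
  imports "HOL-Probability.Probability"
begin

definition lp :: "real \<Rightarrow> (nat \<Rightarrow> 'a::real_normed_field) set" where
  "lp p = {x. summable (\<lambda>n. norm (x n) powr p)}"

definition lp_norm :: "real \<Rightarrow> (nat \<Rightarrow> 'a::real_normed_field) \<Rightarrow> real" where
  "lp_norm p x = (\<Sum>n. norm (x n) powr p) powr (1 / p)"

definition lp_open :: "real \<Rightarrow> (nat \<Rightarrow> 'a::real_normed_field) set \<Rightarrow> bool" where
  "lp_open p U \<longleftrightarrow> U \<subseteq> lp p \<and>
     (\<forall>x\<in>U. \<exists>e>0. \<forall>y\<in>lp p. lp_norm p (\<lambda>n. y n - x n) < e \<longrightarrow> y \<in> U)"

definition lp_borel :: "real \<Rightarrow> (nat \<Rightarrow> 'a::real_normed_field) measure" where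
  "lp_borel p = sigma (lp p) {U. lp_open p U}"

definition bounded_op :: "real \<Rightarrow> ((nat \<Rightarrow> 'a::real_normed_field) \<Rightarrow> (nat \<Rightarrow> 'a)) \<Rightarrow> bool" where
  "bounded_op p T \<longleftrightarrow> (\<forall>x\<in>lp p. T x \<in> lp p) \<and>
     (\<forall>x\<in>lp p. \<forall>y\<in>lp p. \<forall>a b. T (\<lambda>n. a * x n + b * y n) = (\<lambda>n. a * T x n + b * T y n)) \<and>
     (\<exists>C. \<forall>x\<in>lp p. lp_norm p (T x) \<le> C * lp_norm p x)"

definition similar_ops :: "real \<Rightarrow> ((nat \<Rightarrow> 'a::real_normed_field) \<Rightarrow> (nat \<Rightarrow> 'a)) \<Rightarrow> ((nat \<Rightarrow> 'a) \<Rightarrow> (nat \<Rightarrow> 'a)) \<Rightarrow> bool" where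
  "similar_ops p T1 T2 \<longleftrightarrow> (\<exists>J Ji. bounded_op p J \<and> bounded_op p Ji \<and>
     (\<forall>x\<in>lp p. J (Ji x) = x) \<and> (\<forall>x\<in>lp p. Ji (J x) = x) \<and>
     (\<forall>x\<in>lp p. T1 x = J (T2 (Ji x))))"

text \<open>Weighted backward shift: B e_0 = 0, B e_n = w_n e_{n-1}, i.e. (B x)_k = w_{k+1} x_{k+1}.\<close>
definition wshift :: "(nat \<Rightarrow> 'a::real_normed_field) \<Rightarrow> (nat \<Rightarrow> 'a) \<Rightarrow> (nat \<Rightarrow> 'a)" where
  "wshift w x = (\<lambda>k. w (Suc k) * x (Suc k))"

definition invariant_prob :: "real \<Rightarrow> ((nat \<Rightarrow> 'a::real_normed_field) \<Rightarrow> (nat \<Rightarrow> 'a)) \<Rightarrow> (nat \<Rightarrow> 'a) measure \<Rightarrow> bool" where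
  "invariant_prob p T m \<longleftrightarrow> prob_space m \<and> sets m = sets (lp_borel p) \<and> space m = lp p \<and>
     (\<forall>A\<in>sets (lp_borel p). emeasure m (T -` A \<inter> lp p) = emeasure m A)"

definition mutually_singular :: "'b measure \<Rightarrow> 'b measure \<Rightarrow> bool" where
  "mutually_singular m1 m2 \<longleftrightarrow>
     (\<exists>A\<in>sets m1. emeasure m1 A = 0 \<and> emeasure m2 (space m2 - A) = 0)"

definition orthogonal_ops :: "real \<Rightarrow> ((nat \<Rightarrow> 'a::real_normed_field) \<Rightarrow> (nat \<Rightarrow> 'a)) \<Rightarrow> ((nat \<Rightarrow> 'a) \<Rightarrow> (nat \<Rightarrow> 'a)) \<Rightarrow> bool" where
  "orthogonal_ops p T1 T2 \<longleftrightarrow> (\<forall>m1 m2. invariant_prob p T1 m1 \<and> invariant_prob p T2 m2 \<and>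
     emeasure m1 {\<lambda>n. 0} = 0 \<and> emeasure m2 {\<lambda>n. 0} = 0 \<longrightarrow> mutually_singular m1 m2)"

end

theory Submission
  imports Defs
begin

text \<open>
  Write \<open>|w|\<^sub>n = |w\<^sub>1 \<cdots> w\<^sub>n|\<close> (\<open>wprod w n\<close>). If \<open>|v|\<^sub>n / |u|\<^sub>n\<close> is bounded above and
  below, the diagonal operator with entries \<open>v\<^sub>1 \<cdots> v\<^sub>n / (u\<^sub>1 \<cdots> u\<^sub>n)\<close> conjugates \<open>B\<^sub>v\<close>
  into \<open>B\<^sub>u\<close>. Otherwise, up to symmetry, \<open>|v|\<^sub>n \<le> \<delta> |u|\<^sub>n\<close> for arbitrarily small \<open>\<delta>\<close>.

  Since \<open>(B\<^sub>u\<^sup>i x)\<^sub>0 = u\<^sub>1 \<cdots> u\<^sub>i x\<^sub>i\<close>, a \<open>B\<^sub>u\<close>-invariant measure \<open>m\<^sub>1\<close> satisfies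
  \<open>\<integral> min 1 (s |u|\<^sub>i |x\<^sub>i|) dm\<^sub>1 = \<integral> min 1 (s |x\<^sub>0|) dm\<^sub>1\<close>, which is small for small \<open>s\<close>.
  As \<open>v\<close> is bounded and \<open>u\<close> is bounded below, the smallness of \<open>|v|\<^sub>n / |u|\<^sub>n\<close> at one
  index persists for the next \<open>k\<close> indices, which yields \<open>N k\<close> with
  \<open>\<integral> min 1 (|v|\<^sub>n |x\<^sub>n|) dm\<^sub>1 \<le> 2\<^sup>-\<^sup>k\<close> for \<open>n = j + N k\<close>, \<open>j \<le> k\<close>. Hence \<open>m\<^sub>1\<close> is carried by
  the set \<open>E\<close> (\<open>summable_along\<close>) of those \<open>x\<close> for which the series over \<open>k\<close> of
  \<open>min 1 (|v|\<^sub>n |x\<^sub>n|)\<close>, \<open>n = j + N k\<close>, converges for every \<open>j\<close>.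

  \<open>B\<^sub>v\<close> maps \<open>E\<close> into itself, so for a \<open>B\<^sub>v\<close>-invariant \<open>m\<^sub>2\<close> the integral of
  \<open>1\<^sub>E min 1 (|v|\<^sub>n |x\<^sub>n|)\<close> does not depend on \<open>n\<close>, while along \<open>n = j + N k\<close> it tends
  to \<open>0\<close>. So \<open>m\<^sub>2\<close>-almost every point of \<open>E\<close> is \<open>0\<close>, and \<open>m\<^sub>2 E = 0\<close> because \<open>m\<^sub>2\<close>
  does not charge \<open>0\<close>.
\<close>

section \<open>The sequence space \<open>lp p\<close> and weighted shifts\<close>

lemma lp_diff:
  fixes x y :: "nat \<Rightarrow> 'a::real_normed_field"
  assumes p: "0 < p" and x: "x \<in> lp p" and y: "y \<in> lp p"
  shows "(\<lambda>n. y n - x n) \<in> lp p"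
proof -
  have "summable (\<lambda>n. 2 powr p * (norm (y n) powr p + norm (x n) powr p))"
    using x y by (auto simp: lp_def intro: summable_mult summable_add)
  moreover have "norm (norm (y n - x n) powr p) \<le> 2 powr p * (norm (y n) powr p + norm (x n) powr p)"
    for n
  proof -
    have "norm (y n - x n) \<le> 2 * max (norm (y n)) (norm (x n))"
      using norm_triangle_ineq4[of "y n" "x n"] by linarith
    then have "norm (y n - x n) powr p \<le> (2 * max (norm (y n)) (norm (x n))) powr p"
      using p by (intro powr_mono2) auto
    also have "\<dots> = 2 powr p * max (norm (y n)) (norm (x n)) powr p"
      by (simp add: powr_mult)
    also have "\<dots> \<le> 2 powr p * (norm (y n) powr p + norm (x n) powr p)"
      by (intro mult_left_mono) (auto simp: max_def)
    finally show ?thesis by simp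
  qed
  ultimately show ?thesis
    unfolding lp_def by (blast intro: summable_comparison_test')
qed

lemma lp_Suc:
  "x \<in> lp p \<Longrightarrow> (\<lambda>n. x (Suc n)) \<in> lp p"
  unfolding lp_def
  using summable_Suc_iff[where f = "\<lambda>n. norm (x n) powr p"] by simp

lemma lp_mult:
  fixes d x :: "nat \<Rightarrow> 'a::real_normed_field"
  assumes p: "0 < p" and C: "\<forall>n. norm (d n) \<le> C" and x: "x \<in> lp p"
  shows "(\<lambda>n. d n * x n) \<in> lp p" and "lp_norm p (\<lambda>n. d n * x n) \<le> C * lp_norm p x"
proof -
  have C0: "0 \<le> C" using C norm_ge_zero order_trans by blast
  have s: "summable (\<lambda>n. norm (x n) powr p)" using x by (simp add: lp_def)
  then have sC: "summable (\<lambda>n. C powr p * norm (x n) powr p)" by (rule summable_mult)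
  have le: "norm (d n * x n) powr p \<le> C powr p * norm (x n) powr p" for n
    using C p by (simp add: norm_mult powr_mult mult_right_mono powr_mono2)
  have sd: "summable (\<lambda>n. norm (d n * x n) powr p)"
    using le by (intro summable_comparison_test'[OF sC]) simp
  then show "(\<lambda>n. d n * x n) \<in> lp p" by (simp add: lp_def)
  have "(\<Sum>n. norm (d n * x n) powr p) \<le> C powr p * (\<Sum>n. norm (x n) powr p)"
    using suminf_le[OF le sd sC] suminf_mult[OF s] by simp
  then have "lp_norm p (\<lambda>n. d n * x n) \<le> (C powr p * (\<Sum>n. norm (x n) powr p)) powr (1/p)"
    unfolding lp_norm_def using p by (intro powr_mono2 suminf_nonneg sd) auto
  also have "\<dots> = C * lp_norm p x"
    using p C0 s by (simp add: lp_norm_def powr_mult powr_powr suminf_nonneg)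
  finally show "lp_norm p (\<lambda>n. d n * x n) \<le> C * lp_norm p x" .
qed

lemma norm_le_lp_norm:
  fixes x :: "nat \<Rightarrow> 'a::real_normed_field"
  assumes p: "0 < p" and x: "x \<in> lp p"
  shows "norm (x i) \<le> lp_norm p x"
proof -
  have s: "summable (\<lambda>n. norm (x n) powr p)" using x by (simp add: lp_def)
  have "norm (x i) powr p \<le> (\<Sum>n. norm (x n) powr p)"
    using sum_le_suminf[OF s, of "{i}"] by simp
  then have "(norm (x i) powr p) powr (1/p) \<le> (\<Sum>n. norm (x n) powr p) powr (1/p)"
    using p by (intro powr_mono2) auto
  then show ?thesis using p by (simp add: lp_norm_def powr_powr)
qed

lemma space_lp_borel [simp]: "space (lp_borel p) = lp p"
  unfolding lp_borel_def by (rule space_measure_of) (auto simp: lp_open_def)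

lemma sets_lp_borel: "sets (lp_borel p) = sigma_sets (lp p) {U. lp_open p U}"
  unfolding lp_borel_def by (rule sets_measure_of) (auto simp: lp_open_def)

lemma lp_borel_measurable_coord:
  assumes p: "0 < p"
  shows "(\<lambda>x. x i) \<in> borel_measurable (lp_borel p)"
proof (rule borel_measurableI)
  fix S :: "'a set" assume S: "open S"
  have "lp_open p ((\<lambda>x. x i) -` S \<inter> lp p)"
    unfolding lp_open_def
  proof safe
    fix x assume x: "x \<in> lp p" "x i \<in> S"
    then obtain e where e: "e > 0" "ball (x i) e \<subseteq> S" using S open_contains_ball by blast
    have "y i \<in> S" if y: "y \<in> lp p" "lp_norm p (\<lambda>n. y n - x n) < e" for y
    proof -
      have "norm (y i - x i) < e"
        using order_le_less_trans[OF norm_le_lp_norm[OF p lp_diff[OF p x(1) y(1)]] y(2)] by simp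
      then show ?thesis using e by (auto simp: dist_norm norm_minus_commute)
    qed
    then show "\<exists>e>0. \<forall>y\<in>lp p. lp_norm p (\<lambda>n. y n - x n) < e \<longrightarrow> y \<in> (\<lambda>x. x i) -` S \<inter> lp p"
      using e(1) by blast
  qed
  then show "(\<lambda>x. x i) -` S \<inter> space (lp_borel p) \<in> sets (lp_borel p)"
    by (simp add: sets_lp_borel)
qed

lemma wshift_lp:
  fixes w :: "nat \<Rightarrow> 'a::real_normed_field"
  assumes "0 < p" and "\<forall>n\<ge>1. norm (w n) \<le> M" and "x \<in> lp p"
  shows "wshift w x \<in> lp p"
  using lp_mult(1)[of p "\<lambda>n. w (Suc n)" M "\<lambda>n. x (Suc n)"] assms
  by (simp add: wshift_def lp_Suc)

lemma bounded_op_mult: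
  fixes d :: "nat \<Rightarrow> 'a::real_normed_field"
  assumes "0 < p" and "\<forall>n. norm (d n) \<le> C"
  shows "bounded_op p (\<lambda>x n. d n * x n)"
  unfolding bounded_op_def
  using lp_mult[OF assms] by (auto simp: algebra_simps)

lemma similar_ops_wshift_mult:
  fixes d u v :: "nat \<Rightarrow> 'a::real_normed_field"
  assumes p: "0 < p" and nz: "\<forall>n. d n \<noteq> 0"
    and "\<forall>n. norm (d n) \<le> C" and "\<forall>n. norm (inverse (d n)) \<le> C'"
    and rec: "\<forall>n. d (Suc n) * u (Suc n) = d n * v (Suc n)"
  shows "similar_ops p (wshift u) (wshift v)"
  unfolding similar_ops_def
proof (intro exI conjI ballI)
  show "bounded_op p (\<lambda>x n. d n * x n)" "bounded_op p (\<lambda>x n. inverse (d n) * x n)"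
    using assms by (auto intro: bounded_op_mult)
  fix x :: "nat \<Rightarrow> 'a"
  show "(\<lambda>n. d n * (inverse (d n) * x n)) = x" "(\<lambda>n. inverse (d n) * (d n * x n)) = x"
    using nz by (simp_all add: field_simps)
  have "u (Suc k) = d k * v (Suc k) * inverse (d (Suc k))" for k
    using rec nz by (metis mult.commute nonzero_eq_divide_eq divide_inverse)
  then show "wshift u x = (\<lambda>n. d n * wshift v (\<lambda>n. inverse (d n) * x n) n)"
    by (simp add: wshift_def mult.assoc mult.left_commute)
qed

section \<open>Products of weights\<close>

definition wprod :: "(nat \<Rightarrow> 'a::real_normed_field) \<Rightarrow> nat \<Rightarrow> real" where
  "wprod w n = (\<Prod>i\<in>{1..n}. norm (w i))"

lemma wprod_0 [simp]: "wprod w 0 = 1"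
  by (simp add: wprod_def)

lemma wprod_Suc: "wprod w (Suc n) = wprod w n * norm (w (Suc n))"
  by (simp add: wprod_def atLeastAtMostSuc_conv mult.commute)

lemma wprod_nonneg: "0 \<le> wprod w n"
  by (simp add: wprod_def prod_nonneg)

lemma wprod_pos: "\<forall>n\<ge>1. w n \<noteq> 0 \<Longrightarrow> 0 < wprod w n"
  unfolding wprod_def by (intro prod_pos) auto

lemma wprod_mult_norm_wshift:
  "wprod w i * norm (wshift w x i) = wprod w (Suc i) * norm (x (Suc i))"
  by (simp add: wshift_def wprod_Suc norm_mult)

lemma wprod_add_le:
  assumes "\<forall>n\<ge>1. norm (w n) \<le> M"
  shows "wprod w (n + j) \<le> wprod w n * M ^ j"
proof (induction j)
  case (Suc j)
  have "wprod w (n + Suc j) = wprod w (n + j) * norm (w (Suc (n + j)))"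
    by (simp add: wprod_Suc)
  also have "\<dots> \<le> (wprod w n * M ^ j) * M"
    using Suc assms wprod_nonneg[of w "n + j"] by (intro mult_mono) auto
  finally show ?case by (simp add: algebra_simps)
qed simp

lemma wprod_add_ge:
  assumes "\<forall>n\<ge>1. c \<le> norm (w n)" and "0 \<le> c"
  shows "wprod w n * c ^ j \<le> wprod w (n + j)"
proof (induction j)
  case (Suc j)
  have "wprod w n * c ^ Suc j = (wprod w n * c ^ j) * c"
    by (simp add: algebra_simps)
  also have "\<dots> \<le> wprod w (n + j) * norm (w (Suc (n + j)))"
    using Suc assms by (intro mult_mono) (auto simp: wprod_nonneg)
  finally show ?case by (simp add: wprod_Suc)
qed simp

lemma wprod_add_mult_le:
  assumes M: "\<forall>n\<ge>1. norm (v n) \<le> M" and c: "0 < c" "\<forall>n\<ge>1. c \<le> norm (u n)"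
  shows "wprod v (n + j) * wprod u n \<le> (M / c) ^ j * wprod v n * wprod u (n + j)"
proof -
  have "0 \<le> M"
    using M[rule_format, of 1] norm_ge_zero[of "v 1"] by linarith
  then have "wprod v (n + j) * (wprod u n * c ^ j) \<le> (wprod v n * M ^ j) * wprod u (n + j)"
    using M c by (intro mult_mono wprod_add_le wprod_add_ge) (auto simp: wprod_nonneg)
  then show ?thesis
    using c by (simp add: power_divide field_simps)
qed

lemma wprod_small_on_blocks:
  fixes u v :: "nat \<Rightarrow> 'a::real_normed_field"
  assumes unz: "\<forall>n\<ge>1. u n \<noteq> 0" and Mv: "\<forall>n\<ge>1. norm (v n) \<le> Mv"
    and cu: "0 < cu" "\<forall>n\<ge>1. cu \<le> norm (u n)"
    and v_small: "\<forall>\<delta>>0. \<exists>n. wprod v n \<le> \<delta> * wprod u n" and \<delta>: "0 < \<delta>"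
  obtains n where "\<And>j. j \<le> k \<Longrightarrow> wprod v (j + n) \<le> \<delta> * wprod u (j + n)"
proof -
  define R where "R = max 1 (Mv / cu)"
  have R: "1 \<le> R" "Mv / cu \<le> R"
    by (simp_all add: R_def)
  have "0 \<le> Mv"
    using Mv[rule_format, of 1] norm_ge_zero[of "v 1"] by linarith
  then have ratio: "(Mv / cu) ^ j \<le> R ^ k" if "j \<le> k" for j
    using order_trans[OF power_mono[OF R(2)] power_increasing[OF that R(1)]] cu(1) by simp
  have "0 < \<delta> / R ^ k"
    using \<delta> R(1) by simp
  then obtain n where n: "wprod v n \<le> \<delta> / R ^ k * wprod u n"
    using v_small by blast
  show ?thesis
  proof (rule that)
    fix j assume "j \<le> k"
    have "wprod v (n + j) * wprod u n \<le> (Mv / cu) ^ j * wprod v n * wprod u (n + j)"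
      by (rule wprod_add_mult_le[OF Mv cu])
    also have "\<dots> \<le> R ^ k * wprod v n * wprod u (n + j)"
      using ratio[OF \<open>j \<le> k\<close>] by (intro mult_right_mono) (auto simp: wprod_nonneg)
    also have "\<dots> \<le> R ^ k * (\<delta> / R ^ k * wprod u n) * wprod u (n + j)"
      using n R(1) by (intro mult_right_mono mult_left_mono) (auto simp: wprod_nonneg)
    also have "\<dots> = \<delta> * wprod u (n + j) * wprod u n"
      using R(1) by (simp add: field_simps)
    finally show "wprod v (j + n) \<le> \<delta> * wprod u (j + n)"
      using wprod_pos[OF unz, of n] by (simp add: add.commute mult_le_cancel_right_pos)
  qed
qed

lemma similar_ops_wshift_if_wprod_comparable:
  fixes u v :: "nat \<Rightarrow> 'a::real_normed_field"
  assumes p: "0 < p" and unz: "\<forall>n\<ge>1. u n \<noteq> 0" and vnz: "\<forall>n\<ge>1. v n \<noteq> 0"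
    and c1: "c1 > 0" "\<forall>n. c1 * wprod u n \<le> wprod v n"
    and c2: "c2 > 0" "\<forall>n. c2 * wprod v n \<le> wprod u n"
  shows "similar_ops p (wshift u) (wshift v)"
proof -
  define d where "d n = (\<Prod>i\<in>{1..n}. v i / u i)" for n
  have norm_d: "norm (d n) = wprod v n / wprod u n" for n
    by (simp add: d_def wprod_def prod_norm[symmetric] norm_divide prod_dividef)
  have pos: "0 < wprod u n" "0 < wprod v n" for n
    using unz vnz by (simp_all add: wprod_pos)
  show ?thesis
  proof (rule similar_ops_wshift_mult[OF p])
    show "\<forall>n. d n \<noteq> 0"
      using pos by (metis norm_d norm_zero divide_pos_pos less_irrefl)
    show "\<forall>n. norm (d n) \<le> 1 / c2"
      using c2 pos by (simp add: norm_d field_simps mult.commute)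
    show "\<forall>n. norm (inverse (d n)) \<le> 1 / c1"
      using c1 pos by (simp add: norm_inverse norm_divide norm_d field_simps mult.commute)
    show "\<forall>n. d (Suc n) * u (Suc n) = d n * v (Suc n)"
      using unz by (simp add: d_def atLeastAtMostSuc_conv)
  qed
qed

lemma wprod_small_if_not_similar_ops:
  fixes u v :: "nat \<Rightarrow> 'a::real_normed_field"
  assumes p: "0 < p" and unz: "\<forall>n\<ge>1. u n \<noteq> 0" and vnz: "\<forall>n\<ge>1. v n \<noteq> 0"
    and "\<not> similar_ops p (wshift u) (wshift v)"
  shows "(\<forall>\<delta>>0. \<exists>n. wprod v n \<le> \<delta> * wprod u n) \<or> (\<forall>\<delta>>0. \<exists>n. wprod u n \<le> \<delta> * wprod v n)"
  using similar_ops_wshift_if_wprod_comparable[OF p unz vnz] assms(4) by (meson less_imp_le not_le)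

lemma (in prob_space) integral_min_mult_small:
  fixes f :: "'a \<Rightarrow> real"
  assumes f[measurable]: "f \<in> borel_measurable M" and nonneg: "\<And>x. 0 \<le> f x" and e: "0 < e"
  obtains \<delta> where "0 < \<delta>" "\<And>s. 0 \<le> s \<Longrightarrow> s \<le> \<delta> \<Longrightarrow> (\<integral>x. min 1 (s * f x) \<partial>M) \<le> e"
proof -
  have intg: "integrable M (\<lambda>x. min 1 (s * f x))" if "0 \<le> s" for s
    using that nonneg by (intro integrable_const_bound[where B=1]) auto
  have "(\<lambda>k. \<integral>x. min 1 (1 / real (Suc k) * f x) \<partial>M) \<longlonglongrightarrow> (\<integral>x. 0 \<partial>M)"
  proof (rule integral_dominated_convergence[where w="\<lambda>_. 1"])
    show "AE x in M. (\<lambda>k. min 1 (1 / real (Suc k) * f x)) \<longlonglongrightarrow> 0"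
    proof (rule AE_I2)
      fix x
      have "(\<lambda>k. 1 / real (Suc k) * f x) \<longlonglongrightarrow> 0 * f x"
        by (intro tendsto_mult LIMSEQ_Suc[OF lim_inverse_n'] tendsto_const)
      then have "(\<lambda>k. min 1 (1 / real (Suc k) * f x)) \<longlonglongrightarrow> min 1 (0 * f x)"
        by (intro tendsto_min tendsto_const)
      then show "(\<lambda>k. min 1 (1 / real (Suc k) * f x)) \<longlonglongrightarrow> 0" by simp
    qed
  next
    show "\<And>i. AE x in M. norm (min 1 (1 / real (Suc i) * f x)) \<le> 1"
      using nonneg by (intro AE_I2) simp
  qed auto
  then have "(\<lambda>k. \<integral>x. min 1 (1 / real (Suc k) * f x) \<partial>M) \<longlonglongrightarrow> 0"
    by (simp only: integral_zero)
  from order_tendstoD(2)[OF this e]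
  obtain k where k: "(\<integral>x. min 1 (1 / real (Suc k) * f x) \<partial>M) < e"
    by (meson eventually_sequentially order_refl)
  show ?thesis
  proof (rule that[of "1 / real (Suc k)"])
    fix s :: real assume s: "0 \<le> s" "s \<le> 1 / real (Suc k)"
    have "(\<integral>x. min 1 (s * f x) \<partial>M) \<le> (\<integral>x. min 1 (1 / real (Suc k) * f x) \<partial>M)"
      using s nonneg by (intro integral_mono intg min.mono mult_right_mono) auto
    then show "(\<integral>x. min 1 (s * f x) \<partial>M) \<le> e" using k by simp
  qed simp
qed

lemma AE_summable_if_summable_integral:
  fixes f :: "nat \<Rightarrow> 'a \<Rightarrow> real"
  assumes intg: "\<And>k. integrable M (f k)" and nonneg: "\<And>k x. 0 \<le> f k x"
    and summable: "summable (\<lambda>k. \<integral>x. f k x \<partial>M)"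
  shows "AE x in M. summable (\<lambda>k. f k x)"
proof -
  have [measurable]: "f k \<in> borel_measurable M" for k
    using intg by (rule borel_measurable_integrable)
  have "(\<integral>\<^sup>+x. (\<Sum>k. ennreal (f k x)) \<partial>M) = (\<Sum>k. \<integral>\<^sup>+x. ennreal (f k x) \<partial>M)"
    by (rule nn_integral_suminf) measurable
  also have "\<dots> = (\<Sum>k. ennreal (\<integral>x. f k x \<partial>M))"
    using nn_integral_eq_integral[OF intg AE_I2[OF nonneg]] by simp
  also have "\<dots> = ennreal (\<Sum>k. \<integral>x. f k x \<partial>M)"
    by (intro suminf_ennreal2 integral_nonneg_AE AE_I2 nonneg summable)
  finally have "(\<integral>\<^sup>+x. (\<Sum>k. ennreal (f k x)) \<partial>M) \<noteq> \<infinity>" by simp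
  then have "AE x in M. (\<Sum>k. ennreal (f k x)) \<noteq> \<infinity>"
    by (intro nn_integral_PInf_AE) measurable
  then show ?thesis
    by eventually_elim (simp add: summable_suminf_not_top nonneg)
qed

lemma pred_summable_nonneg:
  fixes f :: "nat \<Rightarrow> 'a \<Rightarrow> real"
  assumes [measurable]: "\<And>k. f k \<in> borel_measurable M" and nonneg: "\<And>k x. 0 \<le> f k x"
  shows "Measurable.pred M (\<lambda>x. summable (\<lambda>k. f k x))"
proof -
  have eq: "summable (\<lambda>k. f k x) \<longleftrightarrow> (\<Sum>k. ennreal (f k x)) \<noteq> top" for x
    by (metis ennreal_suminf_neq_top summable_suminf_not_top nonneg)
  have "Measurable.pred M (\<lambda>x. (\<Sum>k. ennreal (f k x)) \<noteq> top)"
    by measurable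
  then show ?thesis
    by (simp only: eq)
qed

lemma mutually_singular_commute:
  assumes "mutually_singular m1 m2" and sets: "sets m1 = sets m2"
  shows "mutually_singular m2 m1"
proof -
  obtain A where A: "A \<in> sets m1" "emeasure m1 A = 0" "emeasure m2 (space m2 - A) = 0"
    using assms(1) by (auto simp: mutually_singular_def)
  have sp: "space m1 = space m2" using sets by (rule sets_eq_imp_space_eq)
  have "space m1 - (space m2 - A) = A"
    using sets.sets_into_space[OF A(1)] sp by blast
  then show ?thesis
    unfolding mutually_singular_def using A sets
    by (intro bexI[of _ "space m2 - A"]) auto
qed

lemma (in prob_space) integral_eq_0_if_tendsto_0:
  fixes g :: "nat \<Rightarrow> 'a \<Rightarrow> real"
  assumes [measurable]: "\<And>k. g k \<in> borel_measurable M" and bound: "\<And>k x. \<bar>g k x\<bar> \<le> 1"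
    and lim: "\<And>x. (\<lambda>k. g k x) \<longlonglongrightarrow> 0" and const: "\<And>k. (\<integral>x. g k x \<partial>M) = c"
  shows "c = 0"
proof -
  have "(\<lambda>k. \<integral>x. g k x \<partial>M) \<longlonglongrightarrow> (\<integral>x. 0 \<partial>M)"
  proof (rule integral_dominated_convergence[where w = "\<lambda>_. 1"])
    show "AE x in M. (\<lambda>k. g k x) \<longlonglongrightarrow> 0"
      using lim by simp
    show "AE x in M. norm (g k x) \<le> 1" for k
      using bound by simp
    show "g k \<in> borel_measurable M" for k
      by measurable
    show "(\<lambda>x. 0::real) \<in> borel_measurable M" "integrable M (\<lambda>_. 1::real)"
      by simp_all
  qed
  then show ?thesis
    using const by (simp add: LIMSEQ_const_iff)
qed

lemma emeasure_eq_0_if_AE_mem_imp_eq: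
  assumes E: "E \<in> sets M" and a: "{a} \<in> null_sets M" and AE: "AE x in M. x \<in> E \<longrightarrow> x = a"
  shows "emeasure M E = 0"
proof -
  have "AE x in M. x \<noteq> a"
    using a by (rule AE_I') auto
  with AE have "AE x in M. x \<notin> E"
    by eventually_elim auto
  then show ?thesis
    using AE_iff_null_sets[OF E] by auto
qed

section \<open>Invariant measures of weighted shifts\<close>

lemma
  assumes inv: "invariant_prob p T m" and T: "\<forall>x\<in>lp p. T x \<in> lp p"
  shows invariant_prob_measurable: "T \<in> measurable m m"
    and invariant_prob_distr: "distr m m T = m"
proof -
  interpret prob_space m using inv by (simp add: invariant_prob_def)
  have sp: "space m = lp p"
    and I: "\<And>A. A \<in> sets m \<Longrightarrow> emeasure m (T -` A \<inter> space m) = emeasure m A"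
    using inv by (auto simp: invariant_prob_def)
  \<comment> \<open>Invariance forces measurability: \<open>emeasure\<close> is 0 off \<open>sets m\<close>, so a non-measurable
    preimage of \<open>A\<close> (equivalently, of its complement) would make both \<open>A\<close> and its complement null.\<close>
  have pre: "T -` A \<inter> space m \<in> sets m" if A: "A \<in> sets m" for A
  proof (rule ccontr)
    assume nA: "T -` A \<inter> space m \<notin> sets m"
    have "T -` (space m - A) \<inter> space m = space m - (T -` A \<inter> space m)"
      using T sp by auto
    then have "T -` (space m - A) \<inter> space m \<notin> sets m"
      using nA by (metis Diff_Diff_Int Int_absorb1 Int_lower2 sets.compl_sets)
    then have "emeasure m (space m - A) = 0" and "emeasure m A = 0"
      using nA A I[of A] I[of "space m - A"] by (auto simp: emeasure_notin_sets)
    then show False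
      using emeasure_compl[OF A] emeasure_space_1 by simp
  qed
  show meas: "T \<in> measurable m m"
    using T pre sp by (auto simp: measurable_def)
  show "distr m m T = m"
    by (rule measure_eqI) (simp_all add: emeasure_distr[OF meas] I)
qed

lemma integral_invariant_prob:
  fixes f :: "_ \<Rightarrow> real"
  assumes inv: "invariant_prob p T m" and T: "\<forall>x\<in>lp p. T x \<in> lp p"
    and f: "f \<in> borel_measurable (lp_borel p)"
  shows "(\<integral>x. f (T x) \<partial>m) = (\<integral>x. f x \<partial>m)"
proof -
  have "f \<in> borel_measurable m"
    using f inv by (simp add: invariant_prob_def cong: measurable_cong_sets)
  then have "(\<integral>x. f (T x) \<partial>m) = (\<integral>x. f x \<partial>distr m m T)"
    by (rule integral_distr[OF invariant_prob_measurable[OF inv T], symmetric])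
  then show ?thesis
    by (simp only: invariant_prob_distr[OF inv T])
qed

lemma invariant_prob_AE_preimage:
  assumes inv: "invariant_prob p T m" and T: "\<forall>x\<in>lp p. T x \<in> lp p"
    and E: "E \<in> sets (lp_borel p)" and into: "\<forall>x\<in>E. T x \<in> E"
  shows "AE x in m. T x \<in> E \<longrightarrow> x \<in> E"
proof -
  interpret prob_space m using inv by (simp add: invariant_prob_def)
  have sets: "sets m = sets (lp_borel p)" and sp: "space m = lp p"
    using inv by (auto simp: invariant_prob_def)
  define P where "P = T -` E \<inter> space m"
  have E': "E \<in> sets m" using E sets by simp
  then have P: "P \<in> sets m"
    unfolding P_def using invariant_prob_measurable[OF inv T] by (rule measurable_sets[rotated])
  have EP: "E \<subseteq> P"
    using into sets.sets_into_space[OF E'] by (auto simp: P_def)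
  have "emeasure m P = emeasure m E"
    using inv E sp by (simp add: invariant_prob_def P_def)
  then have "P - E \<in> null_sets m"
    using emeasure_Diff[OF _ P E' EP] P E' by (simp add: null_sets_def)
  then show ?thesis
    by (rule AE_I') (auto simp: P_def)
qed

lemma integral_wshift_invariant_coord:
  fixes w :: "nat \<Rightarrow> 'a::real_normed_field" and g :: "real \<Rightarrow> real"
  assumes p: "0 < p" and M: "\<forall>n\<ge>1. norm (w n) \<le> M" and inv: "invariant_prob p (wshift w) m"
    and h[measurable]: "h \<in> borel_measurable (lp_borel p)"
    and h_inv: "AE x in m. h (wshift w x) = h x"
    and g[measurable]: "g \<in> borel_measurable borel"
  shows "(\<integral>x. h x * g (wprod w i * norm (x i)) \<partial>m) = (\<integral>x. h x * g (norm (x 0)) \<partial>m)"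
proof (induction i)
  case (Suc i)
  have T: "\<forall>x\<in>lp p. wshift w x \<in> lp p"
    using wshift_lp[OF p M] by blast
  have [measurable_cong]: "sets m = sets (lp_borel p)"
    using inv by (simp add: invariant_prob_def)
  note lp_borel_measurable_coord[OF p, measurable]
  define F where "F x = h x * g (wprod w i * norm (x i))" for x
  have F[measurable]: "F \<in> borel_measurable (lp_borel p)"
    unfolding F_def by measurable
  have "(\<integral>x. h x * g (wprod w (Suc i) * norm (x (Suc i))) \<partial>m) = (\<integral>x. F (wshift w x) \<partial>m)"
  proof (rule integral_cong_AE)
    show "AE x in m. h x * g (wprod w (Suc i) * norm (x (Suc i))) = F (wshift w x)"
      using h_inv by eventually_elim (simp add: F_def wprod_mult_norm_wshift)
    show "(\<lambda>x. F (wshift w x)) \<in> borel_measurable m"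
      by (rule measurable_compose[OF invariant_prob_measurable[OF inv T]]) measurable
  qed measurable
  also have "\<dots> = (\<integral>x. F x \<partial>m)"
    by (rule integral_invariant_prob[OF inv T F])
  finally show ?case
    using Suc by (simp add: F_def)
qed simp

lemma wshift_invariant_coord_integral_small:
  fixes u v :: "nat \<Rightarrow> 'a::real_normed_field"
  assumes p: "0 < p" and unz: "\<forall>n\<ge>1. u n \<noteq> 0"
    and Mu: "\<forall>n\<ge>1. norm (u n) \<le> Mu" and Mv: "\<forall>n\<ge>1. norm (v n) \<le> Mv"
    and cu: "0 < cu" "\<forall>n\<ge>1. cu \<le> norm (u n)"
    and inv: "invariant_prob p (wshift u) m"
    and v_small: "\<forall>\<delta>>0. \<exists>n. wprod v n \<le> \<delta> * wprod u n"
    and e: "0 < e"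
  shows "\<exists>n. \<forall>j\<le>k. (\<integral>x. min 1 (wprod v (j + n) * norm (x (j + n))) \<partial>m) \<le> e"
proof -
  interpret prob_space m
    using inv by (simp add: invariant_prob_def)
  have [measurable_cong]: "sets m = sets (lp_borel p)"
    using inv by (simp add: invariant_prob_def)
  note lp_borel_measurable_coord[OF p, measurable]
  obtain \<delta> where \<delta>: "0 < \<delta>" "\<And>s. 0 \<le> s \<Longrightarrow> s \<le> \<delta> \<Longrightarrow> (\<integral>x. min 1 (s * norm (x 0)) \<partial>m) \<le> e"
    using integral_min_mult_small[of "\<lambda>x. norm (x 0)" e] e by auto
  obtain n where n: "\<And>j. j \<le> k \<Longrightarrow> wprod v (j + n) \<le> \<delta> * wprod u (j + n)"
    using wprod_small_on_blocks[OF unz Mv cu v_small \<delta>(1)] by blast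
  have "(\<integral>x. min 1 (wprod v i * norm (x i)) \<partial>m) \<le> e" if i: "wprod v i \<le> \<delta> * wprod u i" for i
  proof -
    define s where "s = wprod v i / wprod u i"
    have upos: "0 < wprod u i"
      using unz by (rule wprod_pos)
    have "(\<integral>x. min 1 (wprod v i * norm (x i)) \<partial>m) = (\<integral>x. min 1 (s * (wprod u i * norm (x i))) \<partial>m)"
      using upos by (simp add: s_def)
    also have "\<dots> = (\<integral>x. min 1 (s * norm (x 0)) \<partial>m)"
      using integral_wshift_invariant_coord[OF p Mu inv, of "\<lambda>_. 1" "\<lambda>t. min 1 (s * t)" i] by simp
    also have "\<dots> \<le> e"
      using i upos by (intro \<delta>(2)) (simp_all add: s_def wprod_nonneg divide_le_eq)
    finally show ?thesis .
  qed
  then show ?thesis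
    using n by blast
qed

section \<open>Singularity\<close>

definition summable_along :: "real \<Rightarrow> (nat \<Rightarrow> 'a::real_normed_field) \<Rightarrow> (nat \<Rightarrow> nat) \<Rightarrow> (nat \<Rightarrow> 'a) set"
  where "summable_along p w N =
    {x \<in> lp p. \<forall>j. summable (\<lambda>k. min 1 (wprod w (j + N k) * norm (x (j + N k))))}"

lemma sets_summable_along:
  assumes p: "0 < p"
  shows "summable_along p w N \<in> sets (lp_borel p)"
proof -
  note lp_borel_measurable_coord[OF p, measurable]
  have [measurable]: "Measurable.pred (lp_borel p)
      (\<lambda>x. summable (\<lambda>k. min 1 (wprod w (j + N k) * norm (x (j + N k)))))" for j
    by (rule pred_summable_nonneg) (simp_all add: wprod_nonneg)
  have "{x \<in> space (lp_borel p).
      \<forall>j. summable (\<lambda>k. min 1 (wprod w (j + N k) * norm (x (j + N k))))} \<in> sets (lp_borel p)"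
    by measurable
  then show ?thesis
    by (simp add: summable_along_def)
qed

lemma wshift_summable_along:
  assumes "0 < p" and "\<forall>n\<ge>1. norm (w n) \<le> M" and x: "x \<in> summable_along p w N"
  shows "wshift w x \<in> summable_along p w N"
proof -
  have "summable (\<lambda>k. min 1 (wprod w (Suc j + N k) * norm (x (Suc j + N k))))" for j
    using x unfolding summable_along_def by blast
  then have "summable (\<lambda>k. min 1 (wprod w (j + N k) * norm (wshift w x (j + N k))))" for j
    by (simp only: wprod_mult_norm_wshift add_Suc)
  moreover have "wshift w x \<in> lp p"
    using x wshift_lp[OF assms(1,2)] by (simp add: summable_along_def)
  ultimately show ?thesis
    unfolding summable_along_def by blast
qed

lemma AE_summable_along:
  fixes v :: "nat \<Rightarrow> 'a::real_normed_field"
  assumes "prob_space M" and p: "0 < p" and sets[measurable_cong]: "sets M = sets (lp_borel p)"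
    and small: "\<And>j k. j \<le> k \<Longrightarrow> (\<integral>x. min 1 (wprod v (j + N k) * norm (x (j + N k))) \<partial>M) \<le> (1/2) ^ k"
  shows "AE x in M. x \<in> summable_along p v N"
proof -
  interpret prob_space M by fact
  note lp_borel_measurable_coord[OF p, measurable]
  define \<psi> where "\<psi> j k x = min 1 (wprod v (j + N k) * norm (x (j + N k)))"
    for j k and x :: "nat \<Rightarrow> 'a"
  have \<psi>_nonneg: "0 \<le> \<psi> j k x" for j k x
    by (simp add: \<psi>_def wprod_nonneg)
  have [measurable]: "\<psi> j k \<in> borel_measurable M" for j k
    unfolding \<psi>_def by measurable
  have intg: "integrable M (\<psi> j k)" for j k
    using \<psi>_nonneg by (intro integrable_const_bound[where B=1] AE_I2) (auto simp: \<psi>_def)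
  have "summable (\<lambda>k. \<integral>x. \<psi> j k x \<partial>M)" for j
  proof (rule summable_comparison_test')
    show "summable (\<lambda>k. (1/2::real) ^ k)"
      by simp
    show "norm (\<integral>x. \<psi> j k x \<partial>M) \<le> (1/2) ^ k" if "j \<le> k" for k
      using small[OF that] \<psi>_nonneg by (simp add: \<psi>_def integral_nonneg)
  qed
  then have "AE x in M. summable (\<lambda>k. \<psi> j k x)" for j
    using intg \<psi>_nonneg by (intro AE_summable_if_summable_integral)
  then have "AE x in M. \<forall>j. summable (\<lambda>k. \<psi> j k x)"
    by (simp add: AE_all_countable)
  moreover have "AE x in M. x \<in> lp p"
    using sets_eq_imp_space_eq[OF sets] by (intro AE_I2) simp
  ultimately show ?thesis
    by eventually_elim (simp add: summable_along_def \<psi>_def)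
qed

lemma AE_summable_along_imp_coord_eq_0:
  fixes v :: "nat \<Rightarrow> 'a::real_normed_field"
  assumes p: "0 < p" and vnz: "\<forall>n\<ge>1. v n \<noteq> 0" and Mv: "\<forall>n\<ge>1. norm (v n) \<le> M"
    and inv: "invariant_prob p (wshift v) m"
  shows "AE x in m. x \<in> summable_along p v N \<longrightarrow> x j = 0"
proof -
  interpret prob_space m
    using inv by (simp add: invariant_prob_def)
  have [measurable_cong]: "sets m = sets (lp_borel p)"
    using inv by (simp add: invariant_prob_def)
  note lp_borel_measurable_coord[OF p, measurable]
  define E where "E = summable_along p v N"
  have E[measurable]: "E \<in> sets (lp_borel p)"
    unfolding E_def using p by (rule sets_summable_along)
  have "AE x in m. wshift v x \<in> E \<longrightarrow> x \<in> E"
    using wshift_lp[OF p Mv] wshift_summable_along[OF p Mv]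
    by (intro invariant_prob_AE_preimage[OF inv _ E]) (auto simp: E_def)
  then have E_inv: "AE x in m. indicator E (wshift v x) = (indicator E x :: real)"
    by eventually_elim (auto simp: indicator_def E_def dest: wshift_summable_along[OF p Mv])
  define f where "f i x = indicator E x * min 1 (wprod v i * norm (x i))" for i x
  have [measurable]: "f i \<in> borel_measurable m" for i
    unfolding f_def by measurable
  have f_bounds: "0 \<le> f i x" "f i x \<le> 1" for i x
    by (simp_all add: f_def indicator_def wprod_nonneg)
  have "(\<integral>x. f i x \<partial>m) = (\<integral>x. indicator E x * min 1 (norm (x 0)) \<partial>m)" for i
    using integral_wshift_invariant_coord[OF p Mv inv _ E_inv, of "min 1"] by (simp add: f_def)
  moreover have "(\<lambda>k. f (j + N k) x) \<longlonglongrightarrow> 0" for x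
  proof (cases "x \<in> E")
    case True
    then have "summable (\<lambda>k. min 1 (wprod v (j + N k) * norm (x (j + N k))))"
      by (simp add: E_def summable_along_def)
    then show ?thesis
      using True by (simp add: f_def summable_LIMSEQ_zero)
  qed (simp add: f_def)
  ultimately have "(\<integral>x. f j x \<partial>m) = 0"
    using f_bounds
    by (intro integral_eq_0_if_tendsto_0[where g = "\<lambda>k. f (j + N k)"]) (simp_all add: abs_le_iff)
  moreover have "integrable m (f j)"
    using f_bounds by (intro integrable_const_bound[where B=1] AE_I2) auto
  ultimately have "AE x in m. f j x = 0"
    using integral_nonneg_eq_0_iff_AE[of m "f j"] f_bounds by simp
  then show ?thesis
    unfolding E_def[symmetric]
    by eventually_elim
      (use wprod_pos[OF vnz, of j] in \<open>auto simp: f_def indicator_def min_def split: if_splits\<close>)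
qed

lemma emeasure_summable_along_eq_0:
  fixes v :: "nat \<Rightarrow> 'a::real_normed_field"
  assumes p: "0 < p" and vnz: "\<forall>n\<ge>1. v n \<noteq> 0" and Mv: "\<forall>n\<ge>1. norm (v n) \<le> M"
    and inv: "invariant_prob p (wshift v) m" and zero: "emeasure m {\<lambda>n. 0} = 0"
  shows "emeasure m (summable_along p v N) = 0"
proof (rule emeasure_eq_0_if_AE_mem_imp_eq)
  have sets: "sets m = sets (lp_borel p)"
    using inv by (simp add: invariant_prob_def)
  then show "summable_along p v N \<in> sets m"
    using sets_summable_along[OF p] by simp
  note lp_borel_measurable_coord[OF p, measurable]
  have "(\<lambda>n. 0) \<in> lp p"
    using p by (simp add: lp_def)
  then have "{\<lambda>n. 0} = {x \<in> space (lp_borel p). \<forall>i. x i = 0}"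
    by auto
  also have "\<dots> \<in> sets (lp_borel p)"
    by measurable
  finally show "{\<lambda>n. 0} \<in> null_sets m"
    using zero sets by (simp add: null_sets_def)
  have "AE x in m. \<forall>j. x \<in> summable_along p v N \<longrightarrow> x j = 0"
    unfolding AE_all_countable using AE_summable_along_imp_coord_eq_0[OF p vnz Mv inv] by blast
  then show "AE x in m. x \<in> summable_along p v N \<longrightarrow> x = (\<lambda>n. 0)"
    by eventually_elim (auto simp: fun_eq_iff)
qed

lemma wshift_invariant_mutually_singular:
  fixes u v :: "nat \<Rightarrow> 'a::real_normed_field"
  assumes p: "0 < p" and unz: "\<forall>n\<ge>1. u n \<noteq> 0" and vnz: "\<forall>n\<ge>1. v n \<noteq> 0"
    and Mu: "\<forall>n\<ge>1. norm (u n) \<le> Mu" and Mv: "\<forall>n\<ge>1. norm (v n) \<le> Mv"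
    and cu: "0 < cu" "\<forall>n\<ge>1. cu \<le> norm (u n)"
    and inv1: "invariant_prob p (wshift u) m1" and inv2: "invariant_prob p (wshift v) m2"
    and zero2: "emeasure m2 {\<lambda>n. 0} = 0"
    and v_small: "\<forall>\<delta>>0. \<exists>n. wprod v n \<le> \<delta> * wprod u n"
  shows "mutually_singular m2 m1"
proof -
  have "\<exists>n. \<forall>j\<le>k. (\<integral>x. min 1 (wprod v (j + n) * norm (x (j + n))) \<partial>m1) \<le> (1/2) ^ k" for k
    by (rule wshift_invariant_coord_integral_small[OF p unz Mu Mv cu inv1 v_small]) simp
  then obtain N where N: "\<And>j k. j \<le> k \<Longrightarrow>
      (\<integral>x. min 1 (wprod v (j + N k) * norm (x (j + N k))) \<partial>m1) \<le> (1/2) ^ k"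
    by metis
  have sets1: "sets m1 = sets (lp_borel p)"
    using inv1 by (simp add: invariant_prob_def)
  define E where "E = summable_along p v N"
  have E: "E \<in> sets (lp_borel p)"
    unfolding E_def using p by (rule sets_summable_along)
  have "AE x in m1. x \<in> E"
    unfolding E_def using inv1 p sets1 N by (intro AE_summable_along) (simp_all add: invariant_prob_def)
  then have "AE x in m1. x \<notin> space m1 - E"
    by eventually_elim simp
  then have "space m1 - E \<in> null_sets m1"
    using AE_iff_null_sets[of "space m1 - E" m1] E sets1 by auto
  then have "emeasure m1 (space m1 - E) = 0"
    by auto
  moreover have "emeasure m2 E = 0"
    unfolding E_def by (rule emeasure_summable_along_eq_0[OF p vnz Mv inv2 zero2])
  ultimately show ?thesis
    unfolding mutually_singular_def using E inv2 by (auto simp: invariant_prob_def)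
qed

theorem corollary3p11:
  fixes p :: real and u v :: "nat \<Rightarrow> 'a::{real_normed_field, banach}"
  assumes "1 \<le> p"
    and "\<forall>n\<ge>1. u n \<noteq> 0" and "\<forall>n\<ge>1. v n \<noteq> 0"
    and "\<exists>M. \<forall>n\<ge>1. norm (u n) \<le> M" and "\<exists>M. \<forall>n\<ge>1. norm (v n) \<le> M"
    and "\<exists>c>0. \<forall>n\<ge>1. c \<le> norm (u n)" and "\<exists>c>0. \<forall>n\<ge>1. c \<le> norm (v n)"
    and "\<not> similar_ops p (wshift u) (wshift v)"
  shows "orthogonal_ops p (wshift u) (wshift v)"
proof -
  have p: "0 < p"
    using assms(1) by simp
  obtain Mu Mv cu cv where Mu: "\<forall>n\<ge>1. norm (u n) \<le> Mu" and Mv: "\<forall>n\<ge>1. norm (v n) \<le> Mv"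
    and cu: "0 < cu" "\<forall>n\<ge>1. cu \<le> norm (u n)" and cv: "0 < cv" "\<forall>n\<ge>1. cv \<le> norm (v n)"
    using assms(4-7) by blast
  have small: "(\<forall>\<delta>>0. \<exists>n. wprod v n \<le> \<delta> * wprod u n) \<or> (\<forall>\<delta>>0. \<exists>n. wprod u n \<le> \<delta> * wprod v n)"
    using wprod_small_if_not_similar_ops[OF p assms(2,3,8)] .
  show ?thesis
    unfolding orthogonal_ops_def
  proof (intro allI impI, elim conjE)
    fix m1 m2
    assume inv1: "invariant_prob p (wshift u) m1" and inv2: "invariant_prob p (wshift v) m2"
      and zero1: "emeasure m1 {\<lambda>n. 0} = 0" and zero2: "emeasure m2 {\<lambda>n. 0} = 0"
    have sets: "sets m2 = sets m1"
      using inv1 inv2 by (simp add: invariant_prob_def)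
    from small show "mutually_singular m1 m2"
    proof
      assume "\<forall>\<delta>>0. \<exists>n. wprod v n \<le> \<delta> * wprod u n"
      with wshift_invariant_mutually_singular[OF p assms(2,3) Mu Mv cu inv1 inv2 zero2]
      show ?thesis
        using mutually_singular_commute sets by blast
    next
      assume "\<forall>\<delta>>0. \<exists>n. wprod u n \<le> \<delta> * wprod v n"
      then show ?thesis
        by (rule wshift_invariant_mutually_singular[OF p assms(3,2) Mv Mu cv inv2 inv1 zero1])
    qed
  qed
qed

end
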